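(* Let $\xi\ge1$, $0<c_*\le c^*$, $\delta_0>0$, $\delta_1\in(0,1)$, $K=4\xi^2(c^*/c_* )(1+\delta_1)/(1-\delta_1)$, and let $k,\ell$ be positive integers with $4\ell/k\ge K$ and $\max\{k+\ell,4\ell\}\le\delta_0n/\log p$. Suppose $X$ satisfies $$\min_{|S|+m\le\delta_0n/\log p}\phi_-(m,S)\ge c_*(1-\delta_1),\qquad\max_{|S|+m\le\delta_0n/\log p}\phi_+(m,S)\le c^*(1+\delta_1),$$ (minimum/maximum over subsets $S\subseteq\{1,\dots,p\}$ and positive integers $m$). Then for every nonempty $S$ with $|S|\le k$, and $m$ the smallest integer with $m\ge K|S|$, $$\kappa(\xi,S)\ge\{c_*(1-\delta_1)\}^{1/2}/2\quad\text{and}\quad\xi^2\phi_+(m,S)/\kappa^2(\xi,S)\le K.$$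
   Context: $X=(x_1,\dots,x_p)\in\mathbb{R}^{n\times p}$ is a deterministic matrix with $\|x_j\|_2^2=n$ for all $j$. For $\xi\ge1$ and nonempty $S\subseteq\{1,\dots,p\}$, the cone $\mathcal C(\xi,S)=\{u\in\mathbb{R}^p:\|u_{S^c}\|_1\le\xi\|u_S\|_1\}$ and the compatibility factor $\kappa(\xi,S)=\inf\{\|Xu\|_2|S|^{1/2}/(n^{1/2}\|u_S\|_1):0\ne u\in\mathcal C(\xi,S)\}$. For positive integers $m$, sparse eigenvalues $\phi_-(m,S)=\min_{B\supseteq S,|B\setminus S|\le m}\phi_{\min}(X_B^TX_B/n)$ and $\phi_+(m,S)=\max_{B\cap S=\emptyset,|B|\le m}\phi_{\max}(X_B^TX_B/n)$, where $X_B$ is the submatrix of columns indexed by $B$ and $\phi_{\min},\phi_{\max}$ denote smallest and largest eigenvalues. *)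

theory Defs
  imports Complex_Main
begin

text \<open>The design matrix X (n rows, p columns) is a function X :: nat => nat => real,
  entry X r j for row r in {0..<n} and column j in {1..p}.
  Vectors u in R^p are functions nat => real vanishing outside {1..p}.\<close>

definition vec_p :: "nat \<Rightarrow> (nat \<Rightarrow> real) \<Rightarrow> bool" where
  "vec_p p u \<longleftrightarrow> (\<forall>j. j \<notin> {1..p} \<longrightarrow> u j = 0)"

definition l1_on :: "nat set \<Rightarrow> (nat \<Rightarrow> real) \<Rightarrow> real" where
  "l1_on A u = (\<Sum>j\<in>A. \<bar>u j\<bar>)"

definition Xnorm :: "(nat \<Rightarrow> nat \<Rightarrow> real) \<Rightarrow> nat \<Rightarrow> nat \<Rightarrow> (nat \<Rightarrow> real) \<Rightarrow> real" where
  "Xnorm X n p u = sqrt (\<Sum>r<n. (\<Sum>j\<in>{1..p}. X r j * u j)\<^sup>2)"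

definition cone :: "nat \<Rightarrow> real \<Rightarrow> nat set \<Rightarrow> (nat \<Rightarrow> real) set" where
  "cone p \<xi> S = {u. vec_p p u \<and> l1_on ({1..p} - S) u \<le> \<xi> * l1_on S u}"

definition compat :: "(nat \<Rightarrow> nat \<Rightarrow> real) \<Rightarrow> nat \<Rightarrow> nat \<Rightarrow> real \<Rightarrow> nat set \<Rightarrow> real" where
  "compat X n p \<xi> S = Inf {Xnorm X n p u * sqrt (real (card S)) / (sqrt (real n) * l1_on S u)
                          | u. u \<in> cone p \<xi> S \<and> u \<noteq> (\<lambda>_. 0)}"

definition gram :: "(nat \<Rightarrow> nat \<Rightarrow> real) \<Rightarrow> nat \<Rightarrow> nat \<Rightarrow> nat \<Rightarrow> real" where
  "gram X n i j = (\<Sum>r<n. X r i * X r j) / real n"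

definition eigvals :: "(nat \<Rightarrow> nat \<Rightarrow> real) \<Rightarrow> nat \<Rightarrow> nat set \<Rightarrow> real set" where
  "eigvals X n B = {mu. \<exists>v. (\<forall>j. j \<notin> B \<longrightarrow> v j = 0) \<and> (\<exists>j\<in>B. v j \<noteq> 0) \<and>
      (\<forall>i\<in>B. (\<Sum>j\<in>B. gram X n i j * v j) = mu * v i)}"

definition phi_min :: "(nat \<Rightarrow> nat \<Rightarrow> real) \<Rightarrow> nat \<Rightarrow> nat set \<Rightarrow> real" where
  "phi_min X n B = Min (eigvals X n B)"

definition phi_max :: "(nat \<Rightarrow> nat \<Rightarrow> real) \<Rightarrow> nat \<Rightarrow> nat set \<Rightarrow> real" where
  "phi_max X n B = Max (eigvals X n B)"

text \<open>Sparse eigenvalues. phi_minus ranges over B with S \<subseteq> B \<subseteq> {1..p}, |B - S| \<le> m,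
  B nonempty; phi_plus over B \<subseteq> {1..p} disjoint from S with |B| \<le> m; the empty B
  (a 0x0 matrix) is taken to have largest eigenvalue 0 (harmless, since Gram matrices are PSD).\<close>
definition phi_minus :: "(nat \<Rightarrow> nat \<Rightarrow> real) \<Rightarrow> nat \<Rightarrow> nat \<Rightarrow> nat \<Rightarrow> nat set \<Rightarrow> real" where
  "phi_minus X n p m S = Min ((\<lambda>B. phi_min X n B) `
      {B. S \<subseteq> B \<and> B \<subseteq> {1..p} \<and> card (B - S) \<le> m \<and> B \<noteq> {}})"

definition phi_plus :: "(nat \<Rightarrow> nat \<Rightarrow> real) \<Rightarrow> nat \<Rightarrow> nat \<Rightarrow> nat \<Rightarrow> nat set \<Rightarrow> real" where
  "phi_plus X n p m S = Max (insert 0 ((\<lambda>B. phi_max X n B) `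
      {B. B \<subseteq> {1..p} \<and> B \<inter> S = {} \<and> card B \<le> m \<and> B \<noteq> {}}))"

end

theory Submission
  imports Defs "HOL-Analysis.Analysis"
begin

text \<open>Fix a nonempty \<open>S\<close>, let \<open>T = {1..p} - S\<close> and take u in the cone
  \<open>\<parallel>u\<^sub>T\<parallel>\<^sub>1 \<le> \<xi> \<parallel>u\<^sub>S\<parallel>\<^sub>1\<close>.  Order the
  coordinates outside S by decreasing modulus; the head \<open>B\<^sub>0\<close> is S together with the l
  largest of them, and the remaining ones are cut into consecutive blocks of 4l.  The
  minimal sparse eigenvalue bounds \<open>\<parallel>X\<^sub>B\<^sub>0 u\<parallel>\<close> from below by \<open>\<surd>(n A) \<parallel>u\<^sub>S\<parallel>\<^sub>2\<close>, the maximal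
  one bounds each block by \<open>\<surd>(n B)\<close> times its \<open>\<ell>\<^sub>2\<close>-norm, and the shifting inequality of
  Cai, Wang and Xu sums the blocks to at most \<open>\<parallel>u\<^sub>T\<parallel>\<^sub>1 / (2\<surd>l)\<close>.  With the cone condition,
  Cauchy--Schwarz on S and the balance condition \<open>K \<le> 4l/k\<close> this gives
  \<open>\<kappa>(\<xi>,S) \<ge> \<surd>A / 2\<close>, where \<open>A = c\<^sub>*(1-\<delta>\<^sub>1)\<close> and \<open>B = c\<^sup>*(1+\<delta>\<^sub>1)\<close>; the second claim is then
  arithmetic.\<close>

(* HOL-Analysis has its own constant cone; the name here refers to the one of Defs. *)
hide_const (open) Convex.cone

section \<open>Quadratic forms of column submatrices\<close>

definition quad_form :: "(nat \<Rightarrow> nat \<Rightarrow> real) \<Rightarrow> nat \<Rightarrow> nat set \<Rightarrow> (nat \<Rightarrow> real) \<Rightarrow> real" where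
  "quad_form X n B v = (\<Sum>r<n. (\<Sum>j\<in>B. X r j * v j)\<^sup>2)"

definition sqnorm :: "nat set \<Rightarrow> (nat \<Rightarrow> real) \<Rightarrow> real" where
  "sqnorm B v = (\<Sum>j\<in>B. (v j)\<^sup>2)"

definition supported_on :: "nat set \<Rightarrow> (nat \<Rightarrow> real) \<Rightarrow> bool" where
  "supported_on B v \<longleftrightarrow> (\<forall>j. j \<notin> B \<longrightarrow> v j = 0)"

lemma sqnorm_nonneg: "sqnorm B v \<ge> 0"
  by (simp add: sqnorm_def sum_nonneg)

lemma quad_form_scale: "quad_form X n B (\<lambda>j. c * v j) = c\<^sup>2 * quad_form X n B v"
proof -
  have "\<And>r. (\<Sum>j\<in>B. X r j * (c * v j)) = c * (\<Sum>j\<in>B. X r j * v j)"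
    by (simp add: sum_distrib_left algebra_simps)
  then have "quad_form X n B (\<lambda>j. c * v j) = (\<Sum>r<n. (c * (\<Sum>j\<in>B. X r j * v j))\<^sup>2)"
    by (simp only: quad_form_def)
  also have "\<dots> = (\<Sum>r<n. c\<^sup>2 * (\<Sum>j\<in>B. X r j * v j)\<^sup>2)"
    by (simp only: power_mult_distrib)
  also have "\<dots> = c\<^sup>2 * quad_form X n B v"
    by (simp only: quad_form_def sum_distrib_left)
  finally show ?thesis .
qed

lemma sqnorm_scale: "sqnorm B (\<lambda>j. c * v j) = c\<^sup>2 * sqnorm B v"
  by (simp add: sqnorm_def power_mult_distrib sum_distrib_left)

lemma restrict_to_support:
  "quad_form X n B (\<lambda>j. if j \<in> B then v j else 0) = quad_form X n B v"
  "sqnorm B (\<lambda>j. if j \<in> B then v j else 0) = sqnorm B v"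
  "supported_on B (\<lambda>j. if j \<in> B then v j else 0)"
  by (auto simp: quad_form_def sqnorm_def supported_on_def intro!: sum.cong)

lemma quad_form_sqnorm_zero:
  assumes "finite B" "sqnorm B v = 0"
  shows "quad_form X n B v = 0"
proof -
  have "\<forall>j\<in>B. v j = 0"
    using assms sum_nonneg_eq_0_iff[of B "\<lambda>j. (v j)\<^sup>2"] by (simp add: sqnorm_def)
  then show ?thesis by (simp add: quad_form_def)
qed

lemma gram_apply:
  assumes "n > 0"
  shows "(\<Sum>r<n. X r i * (\<Sum>j\<in>B. X r j * v j)) = real n * (\<Sum>j\<in>B. gram X n i j * v j)"
proof -
  have "(\<Sum>r<n. X r i * (\<Sum>j\<in>B. X r j * v j)) = (\<Sum>j\<in>B. (\<Sum>r<n. X r i * X r j) * v j)"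
    by (simp add: sum_distrib_left sum_distrib_right sum.swap[of _ B] mult.assoc)
  also have "\<dots> = real n * (\<Sum>j\<in>B. gram X n i j * v j)"
    using assms by (simp add: gram_def sum_distrib_left)
  finally show ?thesis .
qed

section \<open>Extremal vectors of the Rayleigh quotient\<close>

lemma unit_sphere_compact:
  assumes "finite B"
  shows "compact {v::nat\<Rightarrow>real. supported_on B v \<and> sqnorm B v = 1}"
proof -
  define P where "P = Pi\<^sub>E UNIV (\<lambda>j. if j \<in> B then {-1..1::real} else {0})"
  have "compactin (product_topology (\<lambda>_. euclidean) UNIV) P"
    unfolding P_def by (subst compactin_PiE) auto
  then have compact_P: "compact P" by (simp add: euclidean_product_topology)
  have closed_sphere: "closed {v::nat\<Rightarrow>real. sqnorm B v = 1}"
    unfolding sqnorm_def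
    by (intro closed_Collect_eq continuous_intros continuous_on_product_coordinates)
  have "{v. supported_on B v \<and> sqnorm B v = 1} = P \<inter> {v. sqnorm B v = 1}"
  proof (intro set_eqI iffI)
    fix v assume v: "v \<in> {v. supported_on B v \<and> sqnorm B v = 1}"
    have "\<bar>v j\<bar> \<le> 1" if "j \<in> B" for j
    proof -
      have "(v j)\<^sup>2 \<le> sqnorm B v"
        unfolding sqnorm_def using assms that by (intro member_le_sum) auto
      then have "(v j)\<^sup>2 \<le> 1\<^sup>2" using v by simp
      then show ?thesis using abs_le_square_iff by (metis abs_one)
    qed
    then show "v \<in> P \<inter> {v. sqnorm B v = 1}"
      using v by (auto simp: P_def supported_on_def abs_le_iff)
  next
    fix v assume "v \<in> P \<inter> {v. sqnorm B v = 1}"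
    then show "v \<in> {v. supported_on B v \<and> sqnorm B v = 1}"
      by (auto simp: P_def supported_on_def PiE_def split: if_splits)
  qed
  then show ?thesis using compact_Int_closed[OF compact_P closed_sphere] by simp
qed

text \<open>For \<open>\<sigma> = 1\<close> (resp. \<open>\<sigma> = -1\<close>) some unit vector minimises (resp. maximises) the
  quadratic form relative to the squared norm.\<close>
lemma rayleigh_extremizer:
  assumes fin: "finite B" and ne: "B \<noteq> {}"
  shows "\<exists>v0. supported_on B v0 \<and> sqnorm B v0 = 1 \<and>
           (\<forall>v. supported_on B v \<longrightarrow> \<sigma> * quad_form X n B v0 * sqnorm B v \<le> \<sigma> * quad_form X n B v)"
proof -
  define U where "U = {v::nat\<Rightarrow>real. supported_on B v \<and> sqnorm B v = 1}"
  from ne obtain b where "b \<in> B" by auto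
  have "(\<Sum>j\<in>B. ((if j = b then 1 else 0)::real)\<^sup>2) = (\<Sum>j\<in>B. if j = b then 1 else 0)"
    by (rule sum.cong) auto
  then have "(\<lambda>j. if j = b then 1 else 0) \<in> U"
    using fin \<open>b \<in> B\<close> by (auto simp: U_def supported_on_def sqnorm_def)
  then have nonempty: "U \<noteq> {}" by blast
  have compact: "compact U" using unit_sphere_compact[OF fin] by (simp add: U_def)
  have continuous: "continuous_on UNIV (quad_form X n B)"
    unfolding quad_form_def by (intro continuous_intros continuous_on_product_coordinates)
  then have "continuous_on U (\<lambda>v. \<sigma> * quad_form X n B v)"
    by (intro continuous_on_mult continuous_on_const continuous_on_subset[OF continuous]) auto
  then obtain v0 where v0: "v0 \<in> U"
    and min: "\<And>w. w \<in> U \<Longrightarrow> \<sigma> * quad_form X n B v0 \<le> \<sigma> * quad_form X n B w"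
    using continuous_attains_inf[OF compact nonempty] by blast
  have "\<sigma> * quad_form X n B v0 * sqnorm B v \<le> \<sigma> * quad_form X n B v" if v: "supported_on B v" for v
  proof (cases "sqnorm B v = 0")
    case True then show ?thesis using quad_form_sqnorm_zero[OF fin True] by simp
  next
    case False
    then have pos: "sqnorm B v > 0" using sqnorm_nonneg[of B v] by linarith
    define c where "c = 1 / sqrt (sqnorm B v)"
    have c2: "c\<^sup>2 * sqnorm B v = 1" using pos by (simp add: c_def power_divide)
    have "(\<lambda>j. c * v j) \<in> U" using v c2 by (auto simp: U_def supported_on_def sqnorm_scale)
    from min[OF this] have "\<sigma> * quad_form X n B v0 \<le> c\<^sup>2 * (\<sigma> * quad_form X n B v)"
      by (simp add: quad_form_scale mult.left_commute)
    then have "\<sigma> * quad_form X n B v0 * sqnorm B v \<le> c\<^sup>2 * sqnorm B v * (\<sigma> * quad_form X n B v)"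
      using pos by (metis mult.commute mult.left_commute mult_right_mono less_eq_real_def)
    then show ?thesis using c2 by simp
  qed
  then show ?thesis using v0 unfolding U_def by blast
qed

lemma quadratic_nonneg_linear_coeff:
  fixes d e :: real
  assumes "\<And>t. 2 * t * d + t\<^sup>2 * e \<ge> 0"
  shows "d = 0"
proof -
  define E where "E = \<bar>e\<bar> + 1"
  have E: "E > 0" "e - 2 * E < 0" by (auto simp: E_def)
  have "2 * (- d / E) * d + (- d / E)\<^sup>2 * e \<ge> 0" by (rule assms)
  then have "E\<^sup>2 * (2 * (- d / E) * d + (- d / E)\<^sup>2 * e) \<ge> 0" by simp
  also have "E\<^sup>2 * (2 * (- d / E) * d + (- d / E)\<^sup>2 * e) = d\<^sup>2 * (e - 2 * E)"
    using E by (simp add: field_simps power2_eq_square)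
  finally have "d\<^sup>2 * (e - 2 * E) \<ge> 0" .
  moreover have "d\<^sup>2 * (e - 2 * E) \<le> 0" using E(2) by (simp add: mult_nonneg_nonpos)
  ultimately have "d\<^sup>2 * (e - 2 * E) = 0" by linarith
  then show ?thesis using E(2) by simp
qed

text \<open>First-order condition: an extremal unit vector satisfies
  \<open>X\<^sub>B\<^sup>T X\<^sub>B v0 = \<parallel>X\<^sub>B v0\<parallel>\<^sup>2 v0\<close> (perturb v0 along a coordinate direction).\<close>
lemma extremizer_stationary:
  assumes fin: "finite B" and i: "i \<in> B" and sigma: "\<sigma>\<^sup>2 = 1"
    and v0: "supported_on B v0" "sqnorm B v0 = 1"
    and ext: "\<forall>v. supported_on B v \<longrightarrow> \<sigma> * quad_form X n B v0 * sqnorm B v \<le> \<sigma> * quad_form X n B v"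
  shows "(\<Sum>r<n. X r i * (\<Sum>j\<in>B. X r j * v0 j)) = quad_form X n B v0 * v0 i"
proof -
  define a where "a r = (\<Sum>j\<in>B. X r j * v0 j)" for r
  define A where "A = (\<Sum>r<n. X r i * a r)"
  define C where "C = (\<Sum>r<n. (X r i)\<^sup>2)"
  define \<mu> where "\<mu> = quad_form X n B v0"
  have "2 * t * (\<sigma> * (A - \<mu> * v0 i)) + t\<^sup>2 * (\<sigma> * (C - \<mu>)) \<ge> 0" for t
  proof -
    define w where "w j = v0 j + (if j = i then t else 0)" for j
    have "supported_on B w" using v0 i by (auto simp: supported_on_def w_def)
    then have le: "\<sigma> * \<mu> * sqnorm B w \<le> \<sigma> * quad_form X n B w" using ext by (simp add: \<mu>_def)
    have lin: "(\<Sum>j\<in>B. X r j * w j) = a r + t * X r i" for r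
    proof -
      have "(\<Sum>j\<in>B. X r j * w j) = (\<Sum>j\<in>B. X r j * v0 j + (if j = i then t * X r j else 0))"
        by (rule sum.cong) (auto simp: w_def algebra_simps)
      then show ?thesis using fin i by (simp add: sum.distrib a_def)
    qed
    have "quad_form X n B w = (\<Sum>r<n. (a r)\<^sup>2 + 2 * t * (X r i * a r) + t\<^sup>2 * (X r i)\<^sup>2)"
      unfolding quad_form_def lin by (rule sum.cong) (auto simp: power2_eq_square algebra_simps)
    also have "\<dots> = \<mu> + 2 * t * A + t\<^sup>2 * C"
      by (simp add: sum.distrib sum_distrib_left \<mu>_def quad_form_def a_def A_def C_def)
    finally have q: "quad_form X n B w = \<mu> + 2 * t * A + t\<^sup>2 * C" .
    have "sqnorm B w = (\<Sum>j\<in>B. (v0 j)\<^sup>2 + (if j = i then 2 * t * v0 j + t\<^sup>2 else 0))"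
      unfolding sqnorm_def w_def by (rule sum.cong) (auto simp: power2_eq_square algebra_simps)
    also have "\<dots> = 1 + 2 * t * v0 i + t\<^sup>2"
      using fin i v0(2) by (simp add: sum.distrib sqnorm_def)
    finally show ?thesis using le q by (simp add: algebra_simps)
  qed
  then have "\<sigma> * (A - \<mu> * v0 i) = 0" by (rule quadratic_nonneg_linear_coeff)
  then show ?thesis using sigma by (auto simp: A_def a_def \<mu>_def power2_eq_square)
qed

lemma stationary_eigenvalue:
  assumes n: "n > 0" and fin: "finite B" and v0: "supported_on B v0" "sqnorm B v0 = 1"
    and st: "\<And>i. i \<in> B \<Longrightarrow> (\<Sum>r<n. X r i * (\<Sum>j\<in>B. X r j * v0 j)) = quad_form X n B v0 * v0 i"
  shows "quad_form X n B v0 / real n \<in> eigvals X n B"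
proof -
  have "\<exists>j\<in>B. v0 j \<noteq> 0"
  proof (rule ccontr)
    assume "\<not> (\<exists>j\<in>B. v0 j \<noteq> 0)"
    then have "sqnorm B v0 = 0" by (simp add: sqnorm_def)
    with v0(2) show False by simp
  qed
  moreover have "\<forall>i\<in>B. (\<Sum>j\<in>B. gram X n i j * v0 j) = quad_form X n B v0 / real n * v0 i"
    using st gram_apply[OF n] n by (simp add: field_simps)
  ultimately show ?thesis using v0 unfolding eigvals_def supported_on_def by blast
qed

section \<open>Finiteness of the spectrum and the Rayleigh bounds\<close>

lemma unit_eigenvector:
  assumes "\<mu> \<in> eigvals X n B" "finite B"
  shows "\<exists>v. supported_on B v \<and> sqnorm B v = 1 \<and> (\<forall>i\<in>B. (\<Sum>j\<in>B. gram X n i j * v j) = \<mu> * v i)"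
proof -
  obtain v where v: "\<forall>j. j \<notin> B \<longrightarrow> v j = 0" "\<exists>j\<in>B. v j \<noteq> 0"
      and eigen: "\<forall>i\<in>B. (\<Sum>j\<in>B. gram X n i j * v j) = \<mu> * v i"
    using assms(1) unfolding eigvals_def by blast
  then obtain j0 where j0: "j0 \<in> B" "v j0 \<noteq> 0" by blast
  have "(v j0)\<^sup>2 \<le> sqnorm B v" unfolding sqnorm_def using assms(2) j0 by (intro member_le_sum) auto
  then have pos: "sqnorm B v > 0" using j0 by (smt (verit) zero_less_power2)
  define c where "c = 1 / sqrt (sqnorm B v)"
  have "c\<^sup>2 * sqnorm B v = 1" using pos by (simp add: c_def power_divide)
  then have "sqnorm B (\<lambda>j. c * v j) = 1" by (simp add: sqnorm_scale)
  moreover have "supported_on B (\<lambda>j. c * v j)" using v(1) by (simp add: supported_on_def)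
  moreover have "\<forall>i\<in>B. (\<Sum>j\<in>B. gram X n i j * (c * v j)) = \<mu> * (c * v i)"
    using eigen by (simp add: sum_distrib_left[symmetric] mult.left_commute)
  ultimately show ?thesis by blast
qed

lemma eigenvector_quad_form:
  assumes n: "n > 0"
    and eigen: "\<forall>i\<in>B. (\<Sum>j\<in>B. gram X n i j * v j) = \<mu> * v i"
  shows "quad_form X n B v = real n * \<mu> * sqnorm B v"
proof -
  define a where "a r = (\<Sum>j\<in>B. X r j * v j)" for r
  have "quad_form X n B v = (\<Sum>r<n. (\<Sum>i\<in>B. X r i * v i) * a r)"
    by (simp add: quad_form_def a_def power2_eq_square)
  also have "\<dots> = (\<Sum>i\<in>B. v i * (\<Sum>r<n. X r i * a r))"
    by (simp add: sum_distrib_left sum_distrib_right sum.swap[of _ B] algebra_simps)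
  also have "\<dots> = (\<Sum>i\<in>B. v i * (real n * (\<mu> * v i)))"
    by (rule sum.cong) (use eigen gram_apply[OF n] in \<open>auto simp: a_def\<close>)
  also have "\<dots> = real n * \<mu> * sqnorm B v"
    by (simp add: sqnorm_def sum_distrib_left power2_eq_square algebra_simps)
  finally show ?thesis .
qed

text \<open>The Gram matrix is symmetric, so eigenvectors of distinct eigenvalues are orthogonal.\<close>
lemma eigenvectors_orthogonal:
  assumes eigen1: "\<forall>i\<in>B. (\<Sum>j\<in>B. gram X n i j * v j) = \<mu> * v i"
    and eigen2: "\<forall>i\<in>B. (\<Sum>j\<in>B. gram X n i j * w j) = \<mu>' * w i"
    and ne: "\<mu> \<noteq> \<mu>'"
  shows "(\<Sum>i\<in>B. v i * w i) = 0"
proof -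
  have "(\<Sum>i\<in>B. w i * (\<Sum>j\<in>B. gram X n i j * v j)) = (\<Sum>i\<in>B. \<Sum>j\<in>B. w i * gram X n i j * v j)"
    by (simp add: sum_distrib_left mult.assoc)
  also have "\<dots> = (\<Sum>j\<in>B. \<Sum>i\<in>B. w i * gram X n i j * v j)" by (rule sum.swap)
  also have "\<dots> = (\<Sum>j\<in>B. v j * (\<Sum>i\<in>B. gram X n j i * w i))"
    unfolding sum_distrib_left gram_def by (intro sum.cong refl) (simp add: algebra_simps)
  finally have "(\<Sum>i\<in>B. w i * (\<mu> * v i)) = (\<Sum>j\<in>B. v j * (\<mu>' * w j))"
    using eigen1 eigen2 by simp
  then have "\<mu> * (\<Sum>i\<in>B. v i * w i) = \<mu>' * (\<Sum>i\<in>B. v i * w i)"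
    by (simp add: sum_distrib_left algebra_simps)
  then show ?thesis using ne by simp
qed

text \<open>Bessel's inequality for one coordinate vector: for an orthonormal family F,
  \<open>\<Sum>\<^sub>v\<^sub>\<in>\<^sub>F v\<^sub>j\<^sup>2 \<le> 1\<close> (project the unit vector \<open>e\<^sub>j\<close> onto the span of F).\<close>
lemma orthonormal_coordinate_bessel:
  assumes finB: "finite B" and finF: "finite F" and j: "j \<in> B"
    and normal: "\<forall>v\<in>F. sqnorm B v = 1"
    and orth: "\<forall>v\<in>F. \<forall>w\<in>F. v \<noteq> w \<longrightarrow> (\<Sum>i\<in>B. v i * w i) = 0"
  shows "(\<Sum>v\<in>F. (v j)\<^sup>2) \<le> 1"
proof -
  define e where "e i = (if i = j then 1 else (0::real))" for i
  define P where "P i = (\<Sum>v\<in>F. v j * v i)" for i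
  define Q where "Q = (\<Sum>v\<in>F. (v j)\<^sup>2)"
  have e_norm: "(\<Sum>i\<in>B. (e i)\<^sup>2) = 1"
  proof -
    have "(\<Sum>i\<in>B. (e i)\<^sup>2) = (\<Sum>i\<in>B. if i = j then 1 else 0)"
      by (rule sum.cong) (auto simp: e_def)
    then show ?thesis using finB j by simp
  qed
  have e_proj: "(\<Sum>i\<in>B. e i * P i) = Q"
  proof -
    have "(\<Sum>i\<in>B. e i * P i) = (\<Sum>i\<in>B. if i = j then P j else 0)"
      by (rule sum.cong) (auto simp: e_def)
    then show ?thesis using finB j by (simp add: P_def Q_def power2_eq_square)
  qed
  have proj_norm: "(\<Sum>i\<in>B. (P i)\<^sup>2) = Q"
  proof -
    have "(\<Sum>i\<in>B. (P i)\<^sup>2) = (\<Sum>i\<in>B. \<Sum>v\<in>F. \<Sum>w\<in>F. (v j * w j) * (v i * w i))"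
      unfolding P_def power2_eq_square sum_product by (intro sum.cong refl) (simp add: algebra_simps)
    also have "\<dots> = (\<Sum>v\<in>F. \<Sum>w\<in>F. (v j * w j) * (\<Sum>i\<in>B. v i * w i))"
      by (subst sum.swap) (simp add: sum.swap[of _ B] sum_distrib_left)
    also have "\<dots> = (\<Sum>v\<in>F. \<Sum>w\<in>F. if w = v then (v j)\<^sup>2 else 0)"
    proof (intro sum.cong refl)
      fix v w assume "v \<in> F" "w \<in> F"
      then show "(v j * w j) * (\<Sum>i\<in>B. v i * w i) = (if w = v then (v j)\<^sup>2 else 0)"
        using normal orth by (auto simp: sqnorm_def power2_eq_square)
    qed
    also have "\<dots> = Q" using finF by (simp add: Q_def)
    finally show ?thesis .
  qed
  have "0 \<le> (\<Sum>i\<in>B. (e i - P i)\<^sup>2)" by (simp add: sum_nonneg)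
  also have "\<dots> = (\<Sum>i\<in>B. (e i)\<^sup>2) - 2 * (\<Sum>i\<in>B. e i * P i) + (\<Sum>i\<in>B. (P i)\<^sup>2)"
    by (simp add: power2_diff sum.distrib sum_subtractf sum_distrib_left mult.assoc)
  finally show ?thesis using e_norm e_proj proj_norm by (simp add: Q_def)
qed

lemma orthonormal_card_le:
  assumes finB: "finite B" and finF: "finite F"
    and normal: "\<forall>v\<in>F. sqnorm B v = 1"
    and orth: "\<forall>v\<in>F. \<forall>w\<in>F. v \<noteq> w \<longrightarrow> (\<Sum>i\<in>B. v i * w i) = 0"
  shows "card F \<le> card B"
proof -
  have "real (card F) = (\<Sum>v\<in>F. sqnorm B v)" using normal by simp
  also have "\<dots> = (\<Sum>j\<in>B. \<Sum>v\<in>F. (v j)\<^sup>2)" unfolding sqnorm_def by (rule sum.swap)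
  also have "\<dots> \<le> (\<Sum>j\<in>B. 1)"
    by (rule sum_mono) (rule orthonormal_coordinate_bessel[OF finB finF _ normal orth])
  finally show ?thesis by simp
qed

text \<open>A Gram matrix on a finite index set has only finitely many eigenvalues, so
  \<open>phi_min\<close> and \<open>phi_max\<close> are genuine minima and maxima.\<close>
lemma eigvals_finite:
  assumes finB: "finite B"
  shows "finite (eigvals X n B)"
proof (rule ccontr)
  define E where "E = eigvals X n B"
  assume "infinite (eigvals X n B)"
  then obtain F where F: "finite F" "card F = card B + 1" "F \<subseteq> E"
    using infinite_arbitrarily_large unfolding E_def by blast
  define vec where "vec \<mu> = (SOME v. supported_on B v \<and> sqnorm B v = 1 \<and>
      (\<forall>i\<in>B. (\<Sum>j\<in>B. gram X n i j * v j) = \<mu> * v i))" for \<mu>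
  have vec: "sqnorm B (vec \<mu>) = 1 \<and> (\<forall>i\<in>B. (\<Sum>j\<in>B. gram X n i j * vec \<mu> j) = \<mu> * vec \<mu> i)"
    if "\<mu> \<in> E" for \<mu>
    using someI_ex[OF unit_eigenvector[OF that[unfolded E_def] finB]] unfolding vec_def by blast
  have orth: "(\<Sum>i\<in>B. vec \<mu> i * vec \<mu>' i) = 0" if "\<mu> \<in> F" "\<mu>' \<in> F" "\<mu> \<noteq> \<mu>'" for \<mu> \<mu>'
    using eigenvectors_orthogonal vec F(3) that by blast
  have "inj_on vec F"
  proof (rule inj_onI, rule ccontr)
    fix \<mu> \<mu>' assume *: "\<mu> \<in> F" "\<mu>' \<in> F" "vec \<mu> = vec \<mu>'" "\<mu> \<noteq> \<mu>'"
    then have "sqnorm B (vec \<mu>) = 0" using orth[of \<mu> \<mu>'] by (simp add: sqnorm_def power2_eq_square)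
    then show False using vec * F(3) by auto
  qed
  moreover have "card (vec ` F) \<le> card B"
    using F orth vec by (intro orthonormal_card_le[OF finB]) auto
  ultimately show False using card_image F(2) by fastforce
qed

text \<open>Both extreme eigenvalues are attained by
  the extremal vectors of \<open>rayleigh_extremizer\<close>.\<close>
lemma rayleigh_bounds:
  assumes n: "n > 0" and finB: "finite B" and ne: "B \<noteq> {}" and v: "supported_on B v"
  shows "real n * phi_min X n B * sqnorm B v \<le> quad_form X n B v"
    and "quad_form X n B v \<le> real n * phi_max X n B * sqnorm B v"
proof -
  obtain v0 where v0: "supported_on B v0" "sqnorm B v0 = 1"
    and min: "\<forall>v. supported_on B v \<longrightarrow> 1 * quad_form X n B v0 * sqnorm B v \<le> 1 * quad_form X n B v"
    using rayleigh_extremizer[OF finB ne] by blast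
  obtain v1 where v1: "supported_on B v1" "sqnorm B v1 = 1"
    and max: "\<forall>v. supported_on B v \<longrightarrow> (-1) * quad_form X n B v1 * sqnorm B v \<le> (-1) * quad_form X n B v"
    using rayleigh_extremizer[OF finB ne] by blast
  have eig0: "quad_form X n B v0 / real n \<in> eigvals X n B"
    by (rule stationary_eigenvalue[OF n finB v0]) (rule extremizer_stationary[OF finB _ _ v0 min], auto)
  have eig1: "quad_form X n B v1 / real n \<in> eigvals X n B"
    by (rule stationary_eigenvalue[OF n finB v1]) (rule extremizer_stationary[OF finB _ _ v1 max], auto)
  have "quad_form X n B v0 / real n \<le> \<mu> \<and> \<mu> \<le> quad_form X n B v1 / real n"
    if mu: "\<mu> \<in> eigvals X n B" for \<mu>
  proof -
    obtain w where w: "supported_on B w" "sqnorm B w = 1"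
      and eigen: "\<forall>i\<in>B. (\<Sum>j\<in>B. gram X n i j * w j) = \<mu> * w i"
      using unit_eigenvector[OF mu finB] by blast
    have "real n * \<mu> = quad_form X n B w" using eigenvector_quad_form[OF n eigen] w by simp
    moreover have "quad_form X n B v0 \<le> quad_form X n B w" "quad_form X n B w \<le> quad_form X n B v1"
      using min max w by force+
    ultimately show ?thesis using n by (simp add: field_simps)
  qed
  then have "phi_min X n B = quad_form X n B v0 / real n" "phi_max X n B = quad_form X n B v1 / real n"
    unfolding phi_min_def phi_max_def using eig0 eig1 eigvals_finite[OF finB]
    by (auto intro!: Min_eqI Max_eqI)
  then show "real n * phi_min X n B * sqnorm B v \<le> quad_form X n B v"
    and "quad_form X n B v \<le> real n * phi_max X n B * sqnorm B v"
    using min max v n by auto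
qed

text \<open>\<open>phi_plus\<close> includes the value 0 of the empty column set.\<close>
lemma phi_plus_nonneg: "phi_plus X n p m S \<ge> 0"
  unfolding phi_plus_def by (intro Max_ge) (auto intro: finite_subset[of _ "Pow {1..p}"])

text \<open>Enlarging S shrinks the family of column sets in \<open>phi_plus\<close>.\<close>
lemma phi_plus_antimono:
  assumes "S' \<subseteq> S"
  shows "phi_plus X n p m S \<le> phi_plus X n p m S'"
  unfolding phi_plus_def using assms
  by (intro Max_mono image_mono insert_mono) (auto intro: finite_subset[of _ "Pow {1..p}"])

lemma phi_minus_quad_form:
  assumes n: "n > 0" and B: "S \<subseteq> B" "B \<subseteq> {1..p}" "card (B - S) \<le> m" "B \<noteq> {}"
  shows "real n * phi_minus X n p m S * sqnorm B v \<le> quad_form X n B v"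
proof -
  define Fam where "Fam = {B. S \<subseteq> B \<and> B \<subseteq> {1..p} \<and> card (B - S) \<le> m \<and> B \<noteq> {}}"
  have "finite Fam" by (rule finite_subset[of _ "Pow {1..p}"]) (auto simp: Fam_def)
  then have "phi_minus X n p m S \<le> phi_min X n B"
    unfolding phi_minus_def Fam_def[symmetric] using B by (intro Min_le) (auto simp: Fam_def)
  then have "real n * phi_minus X n p m S * sqnorm B v \<le> real n * phi_min X n B * sqnorm B v"
    by (intro mult_right_mono mult_left_mono sqnorm_nonneg) auto
  also have "\<dots> \<le> quad_form X n B v"
    using rayleigh_bounds(1)[OF n finite_subset[OF B(2)] B(4) restrict_to_support(3)]
    by (simp add: restrict_to_support)
  finally show ?thesis .
qed

lemma phi_plus_quad_form:
  assumes n: "n > 0" and B: "B \<subseteq> {1..p}" "B \<inter> S = {}" "card B \<le> m"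
  shows "quad_form X n B v \<le> real n * phi_plus X n p m S * sqnorm B v"
proof (cases "B = {}")
  case True then show ?thesis
    using phi_plus_nonneg by (simp add: quad_form_def sqnorm_def)
next
  case False
  define Fam where "Fam = {B. B \<subseteq> {1..p} \<and> B \<inter> S = {} \<and> card B \<le> m \<and> B \<noteq> {}}"
  have "finite Fam" by (rule finite_subset[of _ "Pow {1..p}"]) (auto simp: Fam_def)
  then have "phi_max X n B \<le> phi_plus X n p m S"
    unfolding phi_plus_def Fam_def[symmetric] using B False by (intro Max_ge) (auto simp: Fam_def)
  have "quad_form X n B v \<le> real n * phi_max X n B * sqnorm B v"
    using rayleigh_bounds(2)[OF n finite_subset[OF B(1)] False restrict_to_support(3)]
    by (simp add: restrict_to_support)
  also have "\<dots> \<le> real n * phi_plus X n p m S * sqnorm B v"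
    using \<open>phi_max X n B \<le> phi_plus X n p m S\<close>
    by (intro mult_right_mono mult_left_mono sqnorm_nonneg) auto
  finally show ?thesis .
qed

section \<open>The shifting inequality\<close>

text \<open>Elementary polynomial inequality behind the shifting inequality: it is
  \<open>(M - l h - 2 l g)\<^sup>2 + 8 l\<^sup>2 g (h - g) \<ge> 0\<close> rearranged.\<close>
lemma shifting_polynomial:
  fixes l h g M :: real
  assumes "l > 0" "g \<le> h" "0 \<le> g"
  shows "4 * l * ((h + g) * M - 3 * l * h * g + l * g\<^sup>2) \<le> (l * h + M)\<^sup>2"
proof -
  have "(l * h + M)\<^sup>2 - 4 * l * ((h + g) * M - 3 * l * h * g + l * g\<^sup>2)
        = (M - l * h - 2 * l * g)\<^sup>2 + 8 * l\<^sup>2 * (g * (h - g))"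
    by (simp add: power2_eq_square algebra_simps)
  moreover have "8 * l\<^sup>2 * (g * (h - g)) \<ge> 0" using assms by simp
  ultimately show ?thesis by (smt (verit) zero_le_power2)
qed

text \<open>Shifting inequality for one block (Cai, Wang and Xu): for a nonincreasing
  nonnegative sequence, the \<open>\<ell>\<^sub>2\<close>-norm of the block \<open>[m+l, m+5l)\<close> is at most the
  \<open>\<ell>\<^sub>1\<close>-norm of the block \<open>[m, m+4l)\<close> divided by \<open>2\<surd>l\<close>.\<close>
lemma shifting_block:
  fixes y :: "nat \<Rightarrow> real"
  assumes l: "l > 0" and mono: "\<And>i j. i \<le> j \<Longrightarrow> y j \<le> y i" and nonneg: "\<And>i. y i \<ge> 0"
  shows "sqrt (\<Sum>i\<in>{m+l..<m+5*l}. (y i)\<^sup>2) \<le> (\<Sum>i\<in>{m..<m+4*l}. y i) / (2 * sqrt (real l))"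
proof -
  define h where "h = y (m + l)"
  define g where "g = y (m + 4*l - 1)"
  define A where "A = (\<Sum>i\<in>{m..<m+l}. y i)"
  define M where "M = (\<Sum>i\<in>{m+l..<m+4*l}. y i)"
  have gh: "g \<le> h" "0 \<le> g" using mono nonneg l by (auto simp: g_def h_def)
  have lpos: "real l > 0" using l by simp
  have "(\<Sum>i\<in>{m..<m+l}. h) \<le> A" unfolding A_def h_def by (rule sum_mono) (auto intro: mono)
  then have A: "real l * h \<le> A" by simp
  have M: "M \<ge> 0" unfolding M_def by (simp add: sum_nonneg nonneg)
  have "(\<Sum>i\<in>{m+l..<m+4*l}. (y i)\<^sup>2) \<le> (\<Sum>i\<in>{m+l..<m+4*l}. (h + g) * y i - h * g)"
  proof (rule sum_mono)
    fix i assume i: "i \<in> {m+l..<m+4*l}"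
    have "(y i - h) * (y i - g) \<le> 0"
      using i by (intro mult_nonpos_nonneg) (auto simp: h_def g_def intro: mono)
    then show "(y i)\<^sup>2 \<le> (h + g) * y i - h * g" by (simp add: power2_eq_square algebra_simps)
  qed
  also have "\<dots> = (h + g) * M - 3 * real l * h * g"
    by (simp add: sum_subtractf sum_distrib_left M_def)
  finally have middle: "(\<Sum>i\<in>{m+l..<m+4*l}. (y i)\<^sup>2) \<le> (h + g) * M - 3 * real l * h * g" .
  have "(\<Sum>i\<in>{m+4*l..<m+5*l}. (y i)\<^sup>2) \<le> (\<Sum>i\<in>{m+4*l..<m+5*l}. g\<^sup>2)"
    using nonneg by (intro sum_mono power_mono) (auto simp: g_def intro: mono)
  then have last: "(\<Sum>i\<in>{m+4*l..<m+5*l}. (y i)\<^sup>2) \<le> real l * g\<^sup>2" by simp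
  have "(\<Sum>i\<in>{m+l..<m+5*l}. (y i)\<^sup>2)
      = (\<Sum>i\<in>{m+l..<m+4*l}. (y i)\<^sup>2) + (\<Sum>i\<in>{m+4*l..<m+5*l}. (y i)\<^sup>2)"
    by (rule sum.atLeastLessThan_concat[symmetric]) auto
  also have "\<dots> \<le> (h + g) * M - 3 * real l * h * g + real l * g\<^sup>2"
    using middle last by linarith
  also have "\<dots> \<le> (real l * h + M)\<^sup>2 / (4 * real l)"
    using shifting_polynomial[OF lpos gh, of M] lpos by (simp add: field_simps)
  also have "\<dots> \<le> (A + M)\<^sup>2 / (4 * real l)"
    using A M gh lpos by (intro divide_right_mono power_mono) auto
  also have "\<dots> = ((A + M) / (2 * sqrt (real l)))\<^sup>2"
    using lpos by (simp add: power_divide power_mult_distrib)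
  finally have "sqrt (\<Sum>i\<in>{m+l..<m+5*l}. (y i)\<^sup>2) \<le> \<bar>(A + M) / (2 * sqrt (real l))\<bar>"
    using real_sqrt_le_mono by fastforce
  moreover have "(\<Sum>i\<in>{m..<m+4*l}. y i) = A + M"
    unfolding A_def M_def by (rule sum.atLeastLessThan_concat[symmetric]) auto
  moreover have "A + M \<ge> 0" using A M gh lpos by (smt (verit) zero_le_mult_iff)
  ultimately show ?thesis by simp
qed

lemma shifting_inequality:
  fixes y :: "nat \<Rightarrow> real"
  assumes l: "l > 0" and mono: "\<And>i j. i \<le> j \<Longrightarrow> y j \<le> y i" and nonneg: "\<And>i. y i \<ge> 0"
  shows "(\<Sum>t<N. sqrt (\<Sum>i\<in>{l + t*(4*l)..<l + t*(4*l) + 4*l}. (y i)\<^sup>2))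
         \<le> (\<Sum>i<N*(4*l). y i) / (2 * sqrt (real l))"
proof -
  have "(\<Sum>t<N. sqrt (\<Sum>i\<in>{l + t*(4*l)..<l + t*(4*l) + 4*l}. (y i)\<^sup>2))
        \<le> (\<Sum>t<N. (\<Sum>i\<in>{t*(4*l)..<t*(4*l)+4*l}. y i) / (2 * sqrt (real l)))"
  proof (rule sum_mono)
    fix t
    have "{l + t*(4*l)..<l + t*(4*l) + 4*l} = {t*(4*l)+l..<t*(4*l)+5*l}" by auto
    then show "sqrt (\<Sum>i\<in>{l + t*(4*l)..<l + t*(4*l) + 4*l}. (y i)\<^sup>2)
        \<le> (\<Sum>i\<in>{t*(4*l)..<t*(4*l)+4*l}. y i) / (2 * sqrt (real l))"
      using shifting_block[OF l mono nonneg] by presburger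
  qed
  also have "\<dots> = (\<Sum>i<N*(4*l). y i) / (2 * sqrt (real l))"
    by (simp add: sum_divide_distrib[symmetric] sum.nat_group)
  finally show ?thesis .
qed

lemma decreasing_enumeration:
  fixes w :: "nat \<Rightarrow> real"
  assumes "finite T"
  obtains \<sigma> where "bij_betw \<sigma> {..<card T} T"
    and "\<And>i j. i \<le> j \<Longrightarrow> j < card T \<Longrightarrow> w (\<sigma> j) \<le> w (\<sigma> i)"
proof
  define xs where "xs = sort_key (\<lambda>j. - w j) (sorted_list_of_set T)"
  have set: "set xs = T" and distinct: "distinct xs" using assms by (simp_all add: xs_def)
  then have len: "length xs = card T" using distinct_card by fastforce
  show "bij_betw (\<lambda>i. xs ! i) {..<card T} T"
    using bij_betw_nth[OF distinct] len set by (simp add: lessThan_atLeast0)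
  have "sorted (map (\<lambda>j. - w j) xs)" by (simp add: xs_def)
  then show "w (xs ! j) \<le> w (xs ! i)" if "i \<le> j" "j < card T" for i j
    using that len unfolding sorted_iff_nth_mono by fastforce
qed

lemma sum_head_blocks:
  fixes f :: "nat \<Rightarrow> 'a::comm_monoid_add"
  shows "(\<Sum>i<l + N*d. f i) = (\<Sum>i<l. f i) + (\<Sum>t<N. \<Sum>i\<in>{l + t*d..<l + t*d + d}. f i)"
proof -
  have "(\<Sum>i<l + N*d. f i) = (\<Sum>i<l. f i) + (\<Sum>i\<in>{l..<l + N*d}. f i)"
    by (metis atLeast0LessThan le_add1 sum.atLeastLessThan_concat zero_le)
  also have "(\<Sum>i\<in>{l..<l + N*d}. f i) = (\<Sum>i\<in>{0..<N*d}. f (i + l))"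
    using sum.shift_bounds_nat_ivl[of f 0 l "N*d"] by (simp add: add.commute)
  also have "\<dots> = (\<Sum>t<N. \<Sum>i\<in>{t*d..<t*d+d}. f (i + l))"
    by (simp add: sum.nat_group atLeast0LessThan)
  also have "\<dots> = (\<Sum>t<N. \<Sum>i\<in>{l + t*d..<l + t*d + d}. f i)"
  proof (rule sum.cong[OF refl])
    fix t
    show "(\<Sum>i\<in>{t*d..<t*d+d}. f (i + l)) = (\<Sum>i\<in>{l + t*d..<l + t*d + d}. f i)"
      using sum.shift_bounds_nat_ivl[of f "t*d" l "t*d+d"] by (simp add: add.commute add.left_commute)
  qed
  finally show ?thesis .
qed

lemma sum_enumeration_padded:
  fixes N :: nat
  assumes inj: "inj_on \<sigma> {..<N}" and fin: "finite I"
  shows "(\<Sum>i\<in>I. if i < N then g (\<sigma> i) else 0) = (\<Sum>j\<in>\<sigma> ` (I \<inter> {..<N}). g j)"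
proof -
  have "(\<Sum>i\<in>I. if i < N then g (\<sigma> i) else 0) = (\<Sum>i\<in>I \<inter> {..<N}. g (\<sigma> i))"
    using fin sum.inter_restrict[of I "\<lambda>i. g (\<sigma> i)" "{..<N}"] by simp
  also have "\<dots> = (\<Sum>j\<in>\<sigma> ` (I \<inter> {..<N}). g j)"
    using inj by (subst sum.reindex) (auto intro: inj_on_subset)
  finally show ?thesis .
qed

lemma sum_enumeration_blocks:
  fixes N l d :: nat
  assumes inj: "inj_on \<sigma> {..<N}" and d: "d > 0"
  shows "(\<Sum>j\<in>\<sigma> ` {..<N}. g j) = (\<Sum>j\<in>\<sigma> ` ({..<l} \<inter> {..<N}). g j)
           + (\<Sum>t<N. \<Sum>j\<in>\<sigma> ` ({l + t*d..<l + t*d + d} \<inter> {..<N}). g j)"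
proof -
  define f where "f i = (if i < N then g (\<sigma> i) else 0)" for i
  have padded: "(\<Sum>i\<in>I. f i) = (\<Sum>j\<in>\<sigma> ` (I \<inter> {..<N}). g j)" if "finite I" for I
    unfolding f_def using sum_enumeration_padded[OF inj that] .
  have "N * 1 \<le> N * d" using d by (intro mult_le_mono2) simp
  then have "N \<le> l + N*d" by linarith
  then have "(\<Sum>i<N. f i) = (\<Sum>i<l + N*d. f i)"
    by (intro sum.mono_neutral_right[symmetric]) (auto simp: f_def)
  then show ?thesis
    using padded[of "{..<N}"] padded[of "{..<l}"] padded by (simp add: sum_head_blocks)
qed

lemma L2_set_sum_le:
  assumes "finite T"
  shows "L2_set (\<lambda>r. \<Sum>t\<in>T. P t r) A \<le> (\<Sum>t\<in>T. L2_set (P t) A)"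
  using assms
proof (induction T rule: finite_induct)
  case empty then show ?case by (simp add: L2_set_def)
next
  case (insert x F)
  have "L2_set (\<lambda>r. \<Sum>t\<in>insert x F. P t r) A = L2_set (\<lambda>r. P x r + (\<Sum>t\<in>F. P t r)) A"
    using insert by simp
  also have "\<dots> \<le> L2_set (P x) A + L2_set (\<lambda>r. \<Sum>t\<in>F. P t r) A" by (rule L2_set_triangle_ineq)
  also have "\<dots> \<le> L2_set (P x) A + (\<Sum>t\<in>F. L2_set (P t) A)" using insert by simp
  finally show ?case using insert by simp
qed

lemma L2_set_head_le:
  assumes "finite T"
  shows "L2_set P0 A \<le> L2_set (\<lambda>r. P0 r + (\<Sum>t\<in>T. P t r)) A + (\<Sum>t\<in>T. L2_set (P t) A)"
proof -
  have "L2_set P0 A = L2_set (\<lambda>r. (P0 r + (\<Sum>t\<in>T. P t r)) + (- (\<Sum>t\<in>T. P t r))) A" by simp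
  also have "\<dots> \<le> L2_set (\<lambda>r. P0 r + (\<Sum>t\<in>T. P t r)) A + L2_set (\<lambda>r. - (\<Sum>t\<in>T. P t r)) A"
    by (rule L2_set_triangle_ineq)
  also have "L2_set (\<lambda>r. - (\<Sum>t\<in>T. P t r)) A = L2_set (\<lambda>r. \<Sum>t\<in>T. P t r) A"
    by (simp add: L2_set_def)
  finally show ?thesis using L2_set_sum_le[OF assms, of P A] by linarith
qed

section \<open>The shifting bound for \<open>\<parallel>X u\<parallel>\<close>\<close>

definition col_comb :: "(nat \<Rightarrow> nat \<Rightarrow> real) \<Rightarrow> nat set \<Rightarrow> (nat \<Rightarrow> real) \<Rightarrow> nat \<Rightarrow> real" where
  "col_comb X C u r = (\<Sum>j\<in>C. X r j * u j)"

lemma L2_set_col_comb: "L2_set (col_comb X C u) {..<n} = sqrt (quad_form X n C u)"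
  by (simp add: L2_set_def quad_form_def col_comb_def)

lemma head_norm_lower:
  assumes n: "n > 0" and B0: "S \<subseteq> B0" "B0 \<subseteq> {1..p}" "card (B0 - S) \<le> m" "S \<noteq> {}"
    and lower: "a\<^sup>2 \<le> phi_minus X n p m S" and a: "a \<ge> 0"
  shows "sqrt (real n) * a * sqrt (sqnorm S u) \<le> L2_set (col_comb X B0 u) {..<n}"
proof -
  have "sqnorm S u \<le> sqnorm B0 u"
    unfolding sqnorm_def using B0 by (intro sum_mono2) (auto intro: finite_subset)
  then have "real n * a\<^sup>2 * sqnorm S u \<le> real n * phi_minus X n p m S * sqnorm B0 u"
    using lower order_trans[OF zero_le_power2 lower]
    by (intro mult_mono mult_left_mono sqnorm_nonneg) auto
  also have "\<dots> \<le> quad_form X n B0 u"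
    using phi_minus_quad_form[OF n B0(1-3)] B0 by blast
  finally have "sqrt (real n * a\<^sup>2 * sqnorm S u) \<le> sqrt (quad_form X n B0 u)"
    by (rule real_sqrt_le_mono)
  then show ?thesis using a by (simp add: L2_set_col_comb real_sqrt_mult)
qed

lemma block_norm_upper:
  assumes n: "n > 0" and B: "B \<subseteq> {1..p}" "B \<inter> S = {}" "card B \<le> m"
    and upper: "phi_plus X n p m S \<le> b\<^sup>2" and b: "b \<ge> 0"
  shows "L2_set (col_comb X B u) {..<n} \<le> sqrt (real n) * b * sqrt (sqnorm B u)"
proof -
  have "quad_form X n B u \<le> real n * phi_plus X n p m S * sqnorm B u"
    by (rule phi_plus_quad_form[OF n B])
  also have "\<dots> \<le> real n * b\<^sup>2 * sqnorm B u"
    using upper by (intro mult_right_mono mult_left_mono sqnorm_nonneg) auto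
  finally have "sqrt (quad_form X n B u) \<le> sqrt (real n * b\<^sup>2 * sqnorm B u)"
    by (rule real_sqrt_le_mono)
  then show ?thesis using b by (simp add: L2_set_col_comb real_sqrt_mult)
qed

lemma Xnorm_head_blocks:
  fixes N l d :: nat
  assumes ST: "S \<inter> T = {}" "S \<union> T = {1..p}" and bij: "bij_betw \<sigma> {..<N} T" and d: "d > 0"
  shows "Xnorm X n p u = L2_set (\<lambda>r. col_comb X (S \<union> \<sigma> ` ({..<l} \<inter> {..<N})) u r
           + (\<Sum>t<N. col_comb X (\<sigma> ` ({l + t*d..<l + t*d + d} \<inter> {..<N})) u r)) {..<n}"
proof -
  have inj: "inj_on \<sigma> {..<N}" and img: "\<sigma> ` {..<N} = T" using bij by (auto simp: bij_betw_def)
  have fin: "finite S" "finite T" using ST(2) by (metis finite_Un finite_atLeastAtMost)+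
  have "S \<inter> \<sigma> ` ({..<l} \<inter> {..<N}) = {}" using ST(1) img by blast
  then have head: "col_comb X S u r + col_comb X (\<sigma> ` ({..<l} \<inter> {..<N})) u r
      = col_comb X (S \<union> \<sigma> ` ({..<l} \<inter> {..<N})) u r" for r
    unfolding col_comb_def using fin by (intro sum.union_disjoint[symmetric]) auto
  have "col_comb X {1..p} u r = col_comb X S u r + col_comb X T u r" for r
    unfolding col_comb_def ST(2)[symmetric] using ST(1) fin by (simp add: sum.union_disjoint)
  then have "col_comb X {1..p} u r = col_comb X (S \<union> \<sigma> ` ({..<l} \<inter> {..<N})) u r
      + (\<Sum>t<N. col_comb X (\<sigma> ` ({l + t*d..<l + t*d + d} \<inter> {..<N})) u r)" for r
    using sum_enumeration_blocks[OF inj d, of "\<lambda>j. X r j * u j" l] head[of r]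
    unfolding col_comb_def img by simp
  then show ?thesis unfolding Xnorm_def L2_set_def by (simp add: col_comb_def)
qed

text \<open>The blocks: with T enumerated by decreasing \<open>\<bar>u\<^sub>j\<bar>\<close>, the groups of 4l following the
  first l elements satisfy \<open>\<Sum>\<^sub>t \<parallel>X\<^sub>B\<^sub>t u\<parallel> \<le> \<surd>n b \<parallel>u\<^sub>T\<parallel>\<^sub>1 / (2\<surd>l)\<close>, by the maximal sparse
  eigenvalue on each block and the shifting inequality.\<close>
lemma blocks_norm_upper:
  fixes N l :: nat
  assumes n: "n > 0" and T: "T \<subseteq> {1..p}" "T \<inter> S = {}" and l: "l > 0"
    and bij: "bij_betw \<sigma> {..<N} T"
    and decreasing: "\<And>i j. i \<le> j \<Longrightarrow> j < N \<Longrightarrow> \<bar>u (\<sigma> j)\<bar> \<le> \<bar>u (\<sigma> i)\<bar>"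
    and upper: "phi_plus X n p (4*l) S \<le> b\<^sup>2" and b: "b \<ge> 0"
  shows "(\<Sum>t<N. L2_set (col_comb X (\<sigma> ` ({l + t*(4*l)..<l + t*(4*l) + 4*l} \<inter> {..<N})) u) {..<n})
         \<le> sqrt (real n) * b * (l1_on T u / (2 * sqrt (real l)))"
proof -
  have inj: "inj_on \<sigma> {..<N}" and img: "\<sigma> ` {..<N} = T" using bij by (auto simp: bij_betw_def)
  define y where "y i = (if i < N then \<bar>u (\<sigma> i)\<bar> else 0)" for i
  have y_mono: "y j \<le> y i" if "i \<le> j" for i j
    using decreasing[OF that] that by (auto simp: y_def)
  have y_nonneg: "y i \<ge> 0" for i by (simp add: y_def)
  define blk where "blk t = {l + t*(4*l)..<l + t*(4*l) + 4*l}" for t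
  have "L2_set (col_comb X (\<sigma> ` (blk t \<inter> {..<N})) u) {..<n}
      \<le> sqrt (real n) * b * sqrt (\<Sum>i\<in>blk t. (y i)\<^sup>2)" for t
  proof -
    have "card (\<sigma> ` (blk t \<inter> {..<N})) \<le> card (blk t \<inter> {..<N})" by (rule card_image_le) simp
    also have "\<dots> \<le> card (blk t)" by (intro card_mono) (auto simp: blk_def)
    finally have "card (\<sigma> ` (blk t \<inter> {..<N})) \<le> 4 * l" by (simp add: blk_def)
    moreover have "\<sigma> ` (blk t \<inter> {..<N}) \<subseteq> {1..p}" "\<sigma> ` (blk t \<inter> {..<N}) \<inter> S = {}"
      using img T by auto
    moreover have "(\<Sum>i\<in>blk t. (y i)\<^sup>2) = (\<Sum>i\<in>blk t. if i < N then (u (\<sigma> i))\<^sup>2 else 0)"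
      by (rule sum.cong) (auto simp: y_def)
    then have "sqnorm (\<sigma> ` (blk t \<inter> {..<N})) u = (\<Sum>i\<in>blk t. (y i)\<^sup>2)"
      unfolding sqnorm_def
      using sum_enumeration_padded[OF inj, of "blk t" "\<lambda>j. (u j)\<^sup>2"] by (simp add: blk_def)
    ultimately show ?thesis using block_norm_upper[OF n _ _ _ upper b] by metis
  qed
  then have "(\<Sum>t<N. L2_set (col_comb X (\<sigma> ` (blk t \<inter> {..<N})) u) {..<n})
      \<le> sqrt (real n) * b * (\<Sum>t<N. sqrt (\<Sum>i\<in>blk t. (y i)\<^sup>2))"
    by (simp add: sum_mono sum_distrib_left)
  also have "\<dots> \<le> sqrt (real n) * b * ((\<Sum>i<N*(4*l). y i) / (2 * sqrt (real l)))"
    unfolding blk_def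
    using shifting_inequality[OF l y_mono y_nonneg, where N=N] b by (intro mult_left_mono) auto
  also have "(\<Sum>i<N*(4*l). y i) = (\<Sum>i<N. y i)"
    using l by (intro sum.mono_neutral_right) (auto simp: y_def)
  also have "\<dots> = l1_on T u"
    unfolding y_def l1_on_def using sum_enumeration_padded[OF inj, of "{..<N}"] img by simp
  finally show ?thesis by (simp add: blk_def)
qed

text \<open>Core estimate: enumerate the coordinates outside S by decreasing \<open>\<bar>u\<^sub>j\<bar>\<close>, take as head
  S with the l largest of them and as blocks the following groups of 4l.  The head is
  bounded below by the minimal sparse eigenvalue and the blocks above as in
  \<open>blocks_norm_upper\<close>.\<close>
lemma Xnorm_shifting_bound:
  fixes X :: "nat \<Rightarrow> nat \<Rightarrow> real" and u :: "nat \<Rightarrow> real"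
  assumes n: "n > 0" and S: "S \<subseteq> {1..p}" "S \<noteq> {}" and l: "l > 0"
    and lower: "a\<^sup>2 \<le> phi_minus X n p l S" and upper: "phi_plus X n p (4*l) S \<le> b\<^sup>2"
    and a: "a \<ge> 0" and b: "b \<ge> 0"
  shows "sqrt (real n) * a * sqrt (sqnorm S u)
         \<le> Xnorm X n p u + sqrt (real n) * b * (l1_on ({1..p} - S) u / (2 * sqrt (real l)))"
proof -
  define T where "T = {1..p} - S"
  define N where "N = card T"
  obtain \<sigma> where bij: "bij_betw \<sigma> {..<N} T"
    and decreasing: "\<And>i j. i \<le> j \<Longrightarrow> j < N \<Longrightarrow> \<bar>u (\<sigma> j)\<bar> \<le> \<bar>u (\<sigma> i)\<bar>"
    using decreasing_enumeration[of T "\<lambda>j. \<bar>u j\<bar>"] unfolding N_def T_def by blast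
  have img: "\<sigma> ` {..<N} = T" using bij by (simp add: bij_betw_def)
  define B0 where "B0 = S \<union> \<sigma> ` ({..<l} \<inter> {..<N})"
  define Bt where "Bt t = \<sigma> ` ({l + t*(4*l)..<l + t*(4*l) + 4*l} \<inter> {..<N})" for t
  have partition: "S \<inter> T = {}" "S \<union> T = {1..p}" using S by (auto simp: T_def)
  have "4 * l > 0" using l by simp
  then have split: "Xnorm X n p u
      = L2_set (\<lambda>r. col_comb X B0 u r + (\<Sum>t<N. col_comb X (Bt t) u r)) {..<n}"
    using Xnorm_head_blocks[OF partition bij] unfolding B0_def Bt_def by blast
  have "card (B0 - S) \<le> card (\<sigma> ` ({..<l} \<inter> {..<N}))"
    unfolding B0_def by (intro card_mono) auto
  also have "\<dots> \<le> card ({..<l} \<inter> {..<N})" by (rule card_image_le) simp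
  also have "\<dots> \<le> l" by (metis card_lessThan card_mono finite_lessThan inf_le1)
  finally have "sqrt (real n) * a * sqrt (sqnorm S u) \<le> L2_set (col_comb X B0 u) {..<n}"
    using S img by (intro head_norm_lower[OF n _ _ _ _ lower a]) (auto simp: B0_def T_def)
  also have "\<dots> \<le> Xnorm X n p u + (\<Sum>t<N. L2_set (col_comb X (Bt t) u) {..<n})"
    unfolding split by (intro L2_set_head_le) simp
  also have "(\<Sum>t<N. L2_set (col_comb X (Bt t) u) {..<n})
      \<le> sqrt (real n) * b * (l1_on T u / (2 * sqrt (real l)))"
    unfolding Bt_def using partition
    by (intro blocks_norm_upper[where T = T and u = u, OF n _ _ l bij decreasing upper b])
      (auto simp: T_def)
  finally show ?thesis by (simp add: T_def)
qed

section \<open>The compatibility factor\<close>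

lemma cone_l1_on_pos:
  assumes u: "u \<in> cone p \<xi> S" "u \<noteq> (\<lambda>_. 0)" and fin: "finite S"
  shows "l1_on S u > 0"
proof (rule ccontr)
  assume "\<not> l1_on S u > 0"
  then have "l1_on S u = 0" by (smt (verit) l1_on_def sum_nonneg abs_ge_zero)
  moreover have "l1_on ({1..p} - S) u \<ge> 0" by (simp add: l1_on_def sum_nonneg)
  ultimately have "l1_on ({1..p} - S) u = 0" "l1_on S u = 0"
    using u(1) by (auto simp: Defs.cone_def)
  then have "\<forall>j\<in>{1..p} - S. u j = 0" "\<forall>j\<in>S. u j = 0"
    using fin by (simp_all add: l1_on_def sum_nonneg_eq_0_iff)
  moreover have "\<forall>j. j \<notin> {1..p} \<longrightarrow> u j = 0" using u(1) by (simp add: Defs.cone_def vec_p_def)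
  ultimately have "u = (\<lambda>_. 0)" by (metis DiffI)
  with u(2) show False ..
qed

text \<open>Cauchy--Schwarz: \<open>\<parallel>u\<^sub>S\<parallel>\<^sub>1 \<le> \<surd>|S| \<parallel>u\<^sub>S\<parallel>\<^sub>2\<close>.\<close>
lemma l1_on_le_sqnorm: "l1_on S u \<le> sqrt (real (card S)) * sqrt (sqnorm S u)"
proof -
  have "(\<Sum>i\<in>S. \<bar>u i\<bar> * \<bar>1::real\<bar>) \<le> L2_set u S * L2_set (\<lambda>_. 1) S"
    by (rule L2_set_mult_ineq)
  then show ?thesis by (simp add: l1_on_def L2_set_def sqnorm_def L2_set_constant mult.commute)
qed

text \<open>The final arithmetic of the cone argument: with \<open>x = \<parallel>Xu\<parallel>\<close>, \<open>r = \<surd>n\<close>, \<open>s = \<surd>|S|\<close>,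
  \<open>q = \<parallel>u\<^sub>S\<parallel>\<^sub>2\<close>, \<open>L\<^sub>1 = \<parallel>u\<^sub>S\<parallel>\<^sub>1\<close>, \<open>L\<^sub>T = \<parallel>u\<^sub>T\<parallel>\<^sub>1\<close>, \<open>h = \<surd>l\<close>, the shifting bound and the cone
  condition give \<open>x s / (r L\<^sub>1) \<ge> a/2\<close>.\<close>
lemma cone_quotient_bound:
  fixes x r s q L1 LT a b \<xi> h :: real
  assumes shift: "r * a * q \<le> x + r * b * (LT / (2 * h))"
    and cone: "LT \<le> \<xi> * L1" and cs: "L1 \<le> s * q"
    and balance: "b * \<xi> * s \<le> a * h"
    and pos: "L1 > 0" "r > 0" "s > 0" "h > 0" and a: "a \<ge> 0" and b: "b \<ge> 0"
  shows "a / 2 \<le> x * s / (r * L1)"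
proof -
  have "r * a * L1 \<le> r * a * (s * q)" using cs pos a by (intro mult_left_mono) auto
  also have "\<dots> \<le> x * s + r * (b * LT * s) / (2 * h)"
    using mult_right_mono[OF shift, of s] pos by (simp add: algebra_simps)
  also have "r * (b * LT * s) / (2 * h) \<le> r * (a * h * L1) / (2 * h)"
  proof -
    have "b * LT * s \<le> b * (\<xi> * L1) * s" using cone b pos by (simp add: mult_left_mono mult_right_mono)
    also have "\<dots> \<le> a * h * L1" using balance pos by (simp add: mult_right_mono algebra_simps)
    finally show ?thesis using pos by (intro divide_right_mono mult_left_mono) auto
  qed
  also have "r * (a * h * L1) / (2 * h) = r * a * L1 / 2" using pos by simp
  finally have "r * a * L1 / 2 \<le> x * s" by simp
  then show ?thesis using pos by (simp add: field_simps)
qed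

lemma compat_lower_bound:
  assumes n: "n > 0" and S: "S \<subseteq> {1..p}" "S \<noteq> {}" and l: "l > 0" and xi: "\<xi> \<ge> 0"
    and lower: "a\<^sup>2 \<le> phi_minus X n p l S" and upper: "phi_plus X n p (4*l) S \<le> b\<^sup>2"
    and a: "a \<ge> 0" and b: "b \<ge> 0"
    and balance: "b * \<xi> * sqrt (real (card S)) \<le> a * sqrt (real l)"
  shows "a / 2 \<le> compat X n p \<xi> S"
  unfolding compat_def
proof (rule cInf_greatest)
  have fin: "finite S" using S(1) finite_subset by blast
  obtain j0 where j0: "j0 \<in> S" using S(2) by blast
  define e where "e j = (if j = j0 then 1 else (0::real))" for j
  have "l1_on ({1..p} - S) e = 0" unfolding l1_on_def e_def using j0 by (intro sum.neutral) auto
  moreover have "l1_on S e \<ge> 0" by (simp add: l1_on_def sum_nonneg)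
  moreover have "vec_p p e" using j0 S by (auto simp: vec_p_def e_def)
  moreover have "e \<noteq> (\<lambda>_. 0)" by (metis e_def zero_neq_one)
  ultimately have "e \<in> cone p \<xi> S \<and> e \<noteq> (\<lambda>_. 0)" using xi by (simp add: Defs.cone_def)
  then show "{Xnorm X n p u * sqrt (real (card S)) / (sqrt (real n) * l1_on S u) |u.
      u \<in> cone p \<xi> S \<and> u \<noteq> (\<lambda>_. 0)} \<noteq> {}" by blast
  fix x assume "x \<in> {Xnorm X n p u * sqrt (real (card S)) / (sqrt (real n) * l1_on S u) |u.
      u \<in> cone p \<xi> S \<and> u \<noteq> (\<lambda>_. 0)}"
  then obtain u where u: "u \<in> cone p \<xi> S" "u \<noteq> (\<lambda>_. 0)"
    and x: "x = Xnorm X n p u * sqrt (real (card S)) / (sqrt (real n) * l1_on S u)" by blast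
  show "a / 2 \<le> x" unfolding x
  proof (rule cone_quotient_bound[OF Xnorm_shifting_bound[OF n S l lower upper a b] _
        l1_on_le_sqnorm balance cone_l1_on_pos[OF u fin] _ _ _ a b])
    show "l1_on ({1..p} - S) u \<le> \<xi> * l1_on S u" using u(1) by (simp add: Defs.cone_def)
  qed (use n S fin l in \<open>auto simp: card_gt_0_iff\<close>)
qed

text \<open>With \<open>A = c\<^sub>*(1-\<delta>\<^sub>1)\<close> and \<open>B = c\<^sup>*(1+\<delta>\<^sub>1)\<close> one has \<open>K = 4\<xi>\<^sup>2B/A\<close>; the hypothesis
  \<open>K \<le> 4l/k\<close> then yields the balance condition for every \<open>|S| \<le> k\<close>.\<close>
lemma balance_condition:
  fixes A B \<xi> :: real and s k l :: nat
  assumes A: "A > 0" and B: "B \<ge> 0" and xi: "\<xi> \<ge> 0" and s: "s \<le> k" and k: "k > 0"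
    and ratio: "4 * \<xi>\<^sup>2 * B / A \<le> 4 * real l / real k"
  shows "sqrt B * \<xi> * sqrt (real s) \<le> sqrt A * sqrt (real l)"
proof -
  have "4 * \<xi>\<^sup>2 * B / A * (A * real k) \<le> 4 * real l / real k * (A * real k)"
    using ratio A k by (intro mult_right_mono) auto
  moreover have "4 * \<xi>\<^sup>2 * B / A * (A * real k) = 4 * (\<xi>\<^sup>2 * B * real k)" using A by simp
  moreover have "4 * real l / real k * (A * real k) = 4 * (A * real l)" using k by simp
  ultimately have "\<xi>\<^sup>2 * B * real k \<le> A * real l" by linarith
  moreover have "\<xi>\<^sup>2 * B * real s \<le> \<xi>\<^sup>2 * B * real k" using s B by (intro mult_left_mono) auto
  ultimately have "\<xi>\<^sup>2 * B * real s \<le> A * real l" by linarith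
  moreover have "(sqrt B * \<xi> * sqrt (real s))\<^sup>2 = \<xi>\<^sup>2 * B * real s"
    using B by (simp add: power_mult_distrib)
  moreover have "(sqrt A * sqrt (real l))\<^sup>2 = A * real l"
    using A by (simp add: power_mult_distrib)
  ultimately have "(sqrt B * \<xi> * sqrt (real s))\<^sup>2 \<le> (sqrt A * sqrt (real l))\<^sup>2" by simp
  then show ?thesis by (rule power2_le_imp_le) (use A in simp)
qed

lemma enlargement_size:
  fixes K :: real and s k l :: nat
  assumes K: "K > 0" "K \<le> 4 * real l / real k" and s: "0 < s" "s \<le> k"
  shows "0 < nat \<lceil>K * real s\<rceil>" "nat \<lceil>K * real s\<rceil> \<le> 4 * l"
proof -
  show "0 < nat \<lceil>K * real s\<rceil>" using K s by simp
  have "K * real s \<le> 4 * real l / real k * real k" using K s by (intro mult_mono) auto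
  then have "K * real s \<le> real (4 * l)" using s by simp
  then show "nat \<lceil>K * real s\<rceil> \<le> 4 * l" by (simp add: nat_le_iff ceiling_le_iff)
qed

lemma compat_ratio_bound:
  fixes A B \<phi> \<kappa> \<xi> :: real
  assumes A: "A > 0" and phi: "0 \<le> \<phi>" "\<phi> \<le> B" and kappa: "sqrt A / 2 \<le> \<kappa>"
  shows "\<xi>\<^sup>2 * \<phi> / \<kappa>\<^sup>2 \<le> 4 * \<xi>\<^sup>2 * B / A"
proof -
  have "sqrt A / 2 > 0" using A by simp
  then have "\<xi>\<^sup>2 * \<phi> / \<kappa>\<^sup>2 \<le> \<xi>\<^sup>2 * B / (sqrt A / 2)\<^sup>2"
    using phi kappa by (intro frac_le mult_left_mono power_mono) auto
  also have "\<dots> = 4 * \<xi>\<^sup>2 * B / A" using A by (simp add: power_divide)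
  finally show ?thesis .
qed

theorem mainTheorem11:
  fixes X :: "nat \<Rightarrow> nat \<Rightarrow> real" and n p k l :: nat
    and \<xi> c_lo c_hi \<delta>0 \<delta>1 K :: real
  assumes col_norm: "\<forall>j\<in>{1..p}. (\<Sum>r<n. (X r j)\<^sup>2) = real n"
    and xi: "\<xi> \<ge> 1"
    and c: "0 < c_lo" "c_lo \<le> c_hi"
    and d0: "\<delta>0 > 0"
    and d1: "0 < \<delta>1" "\<delta>1 < 1"
    and K_def: "K = 4 * \<xi>\<^sup>2 * (c_hi / c_lo) * (1 + \<delta>1) / (1 - \<delta>1)"
    and kl: "k > 0" "l > 0"
    and ratio: "4 * real l / real k \<ge> K"
    and size: "real (max (k + l) (4 * l)) \<le> \<delta>0 * real n / ln (real p)"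
    and sparse: "\<forall>S m. S \<subseteq> {1..p} \<and> m > 0 \<and> real (card S + m) \<le> \<delta>0 * real n / ln (real p)
        \<longrightarrow> phi_minus X n p m S \<ge> c_lo * (1 - \<delta>1) \<and> phi_plus X n p m S \<le> c_hi * (1 + \<delta>1)"
  shows "\<forall>S. S \<subseteq> {1..p} \<and> S \<noteq> {} \<and> card S \<le> k \<longrightarrow>
     (let m = nat \<lceil>K * real (card S)\<rceil> in
       compat X n p \<xi> S \<ge> sqrt (c_lo * (1 - \<delta>1)) / 2 \<and>
       \<xi>\<^sup>2 * phi_plus X n p m S / (compat X n p \<xi> S)\<^sup>2 \<le> K)"
proof (intro allI impI)
  fix S assume "S \<subseteq> {1..p} \<and> S \<noteq> {} \<and> card S \<le> k"
  then have S: "S \<subseteq> {1..p}" "S \<noteq> {}" and Sk: "card S \<le> k" by auto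
  define A B where "A = c_lo * (1 - \<delta>1)" and "B = c_hi * (1 + \<delta>1)"
  have AB: "A > 0" "B > 0" and K: "K = 4 * \<xi>\<^sup>2 * B / A"
    using c d1 by (auto simp: A_def B_def K_def)
  have n: "n > 0" using size kl by (cases "n = 0") auto
  have lower: "(sqrt A)\<^sup>2 \<le> phi_minus X n p l S"
    using sparse size Sk S kl AB by (auto simp: A_def)
  have upper: "phi_plus X n p m S \<le> B" if "0 < m" "m \<le> 4 * l" for m
  proof -
    have "real (card {} + m) \<le> real (max (k + l) (4 * l))" using that by simp
    then have "phi_plus X n p m {} \<le> B" using sparse size that by (simp add: B_def)
    then show ?thesis using phi_plus_antimono[of "{}" S] by (meson empty_subsetI order_trans)
  qed
  have balance: "sqrt B * \<xi> * sqrt (real (card S)) \<le> sqrt A * sqrt (real l)"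
    using balance_condition[OF AB(1) less_imp_le[OF AB(2)] _ Sk kl(1)] xi ratio K by simp
  have kappa: "sqrt A / 2 \<le> compat X n p \<xi> S"
    using compat_lower_bound[OF n S kl(2) _ lower _ _ _ balance] upper[of "4 * l"] kl xi AB by simp
  have "K > 0" using AB xi by (simp add: K)
  moreover have "0 < card S" using S by (simp add: card_gt_0_iff finite_subset)
  ultimately have m: "0 < nat \<lceil>K * real (card S)\<rceil>" "nat \<lceil>K * real (card S)\<rceil> \<le> 4 * l"
    using enlargement_size ratio Sk by blast+
  show "let m = nat \<lceil>K * real (card S)\<rceil> in
       compat X n p \<xi> S \<ge> sqrt (c_lo * (1 - \<delta>1)) / 2 \<and>
       \<xi>\<^sup>2 * phi_plus X n p m S / (compat X n p \<xi> S)\<^sup>2 \<le> K"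
    using kappa compat_ratio_bound[OF AB(1) phi_plus_nonneg upper[OF m] kappa] K
    by (simp add: Let_def A_def)
qed

end
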